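(* Let QS4 be the modal predicate calculus obtained from classical predicate calculus by adding a unary connective $\Box$ with axiom schemes $\Box p\to p$, $\Box p\to\Box\Box p$, $\Box(p\to q)\to(\Box p\to\Box q)$ and the rule $p\,/\,\Box p$. Define a translation $A\mapsto A_\Box$ from formulas of QHC to formulas of QS4 by recursion: atomic propositions are unchanged, and $0_\Box=0$; $\bot_\Box=0$; each atomic problem $\pi(t_1,\dots,t_n)\neq\bot$ is sent to $\Box\bar\pi(t_1,\dots,t_n)$, where $\bar\pi$ is a proposition variable of the same arity assigned injectively to $\pi$ (and distinct from the proposition variables of QHC); classical connectives and quantifiers are kept; intuitionistic $\land,\lor,\exists$ become the classical ones ($(\alpha\land\beta)_\Box=\alpha_\Box\land\beta_\Box$, etc.); intuitionistic $\to$ and $\forall$ become classical and prefixed by $\Box$: $(\alpha\to\beta)_\Box=\Box(\alpha_\Box\to\beta_\Box)$, $(\forall x\,\alpha)_\Box=\Box\forall x\,\alpha_\Box$; $(?\alpha)_\Box=\alpha_\Box$; $(!p)_\Box=\Box p_\Box$. Then if $A_1,\dots,A_n\vdash_{\mathrm{QHC}} A$, we have $(A_1)_\Box,\dots,(A_n)_\Box\vdash_{\mathrm{QS4}} A_\Box$.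
   Context: QHC is a two-sorted first-order calculus. Its only terms are individual variables. Every formula is either a problem (denoted by Greek letters $\alpha,\beta,\gamma,\dots$) or a proposition (denoted by Latin letters $p,q,\dots$). Atomic formulas are proposition variables $p(t_1,\dots,t_n)$ (of proposition type), problem variables $\pi(t_1,\dots,t_n)$ (of problem type), and the constants $0$ (a proposition, classical falsity) and $\bot$ (a problem, intuitionistic absurdity). Propositions are closed under the classical connectives $\land,\lor,\to$ and quantifiers $\exists,\forall$; problems are closed under the intuitionistic connectives $\land,\lor,\to$ and quantifiers $\exists,\forall$ (the same symbols are used, distinguished by the type of the arguments). $\neg p$ abbreviates $p\to 0$, $\neg\alpha$ abbreviates $\alpha\to\bot$, and $\leftrightarrow$ is defined as usual. There are two type-conversion operators: if $p$ is a proposition then $!p$ is a problem, and if $\alpha$ is a problem then $?\alpha$ is a proposition. Deductive system of QHC: all axioms and rules of classical predicate logic applied to all propositions; all postulates and rules of intuitionistic predicate logic applied to all problems; the rules $p\,/\,!p$ and $\alpha\,/\,?\alpha$; and the schemas $?!p\to p$; $\alpha\to\, !?\alpha$; $!(p\to q)\to(!p\to !q)$; $?(\alpha\to\beta)\to(?\alpha\to ?\beta)$; $!0\to\bot$; $?(\alpha\land\beta)\leftrightarrow ?\alpha\land ?\beta$; $?(\alpha\lor\beta)\leftrightarrow ?\alpha\lor ?\beta$; $?\bot\to 0$; $?\exists x\,\alpha(x)\leftrightarrow\exists x\,?\alpha(x)$; $?\forall x\,\alpha(x)\to\forall x\,?\alpha(x)$ (usual variable side conditions implicit). $\vdash A$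 means $A$ is derivable in QHC; $A\Rightarrow B$ means $\vdash A\to B$ and $A\Leftrightarrow B$ means $\vdash A\leftrightarrow B$ (with $A,B$ of the same type); $A\vdash B$ means $B$ is derivable in QHC from the premise $A$. Notation: $\Box p := ?!p$ (a proposition) and $\nabla\alpha := !?\alpha$ (a problem). QC and QH denote classical and intuitionistic predicate calculus. *)

theory Defs
  imports Main
begin

text \<open>Individual variables are natural numbers (de Bruijn indices); a quantifier binds
index 0 of its body.\<close>

datatype pform =
    PAtom nat "nat list"
  | PFalse
  | PConj pform pform
  | PDisj pform pform
  | PImp pform pform
  | PEx pform
  | PAll pform
  | PQue qform
and qform =
    QAtom nat "nat list"
  | QBot
  | QConj qform qform
  | QDisj qform qform
  | QImp qform qform
  | QEx qform
  | QAll qform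
  | QBang pform

datatype form = FP pform | FQ qform

definition up :: "(nat \<Rightarrow> nat) \<Rightarrow> nat \<Rightarrow> nat" where
  "up s = (\<lambda>k. case k of 0 \<Rightarrow> 0 | Suc j \<Rightarrow> Suc (s j))"

definition inst0 :: "nat \<Rightarrow> nat \<Rightarrow> nat" where
  "inst0 t = (\<lambda>k. case k of 0 \<Rightarrow> t | Suc j \<Rightarrow> j)"

primrec substP :: "(nat \<Rightarrow> nat) \<Rightarrow> pform \<Rightarrow> pform"
and substQ :: "(nat \<Rightarrow> nat) \<Rightarrow> qform \<Rightarrow> qform" where
  "substP s (PAtom n ts) = PAtom n (map s ts)"
| "substP s PFalse = PFalse"
| "substP s (PConj a b) = PConj (substP s a) (substP s b)"
| "substP s (PDisj a b) = PDisj (substP s a) (substP s b)"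
| "substP s (PImp a b) = PImp (substP s a) (substP s b)"
| "substP s (PEx a) = PEx (substP (up s) a)"
| "substP s (PAll a) = PAll (substP (up s) a)"
| "substP s (PQue a) = PQue (substQ s a)"
| "substQ s (QAtom n ts) = QAtom n (map s ts)"
| "substQ s QBot = QBot"
| "substQ s (QConj a b) = QConj (substQ s a) (substQ s b)"
| "substQ s (QDisj a b) = QDisj (substQ s a) (substQ s b)"
| "substQ s (QImp a b) = QImp (substQ s a) (substQ s b)"
| "substQ s (QEx a) = QEx (substQ (up s) a)"
| "substQ s (QAll a) = QAll (substQ (up s) a)"
| "substQ s (QBang p) = QBang (substP s p)"

definition PNeg :: "pform \<Rightarrow> pform" where "PNeg p = PImp p PFalse"
definition PIff :: "pform \<Rightarrow> pform \<Rightarrow> pform" where "PIff p q = PConj (PImp p q) (PImp q p)"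

inductive cl_axP :: "pform \<Rightarrow> bool" where
  "cl_axP (PImp a (PImp b a))"
| "cl_axP (PImp (PImp a (PImp b c)) (PImp (PImp a b) (PImp a c)))"
| "cl_axP (PImp (PConj a b) a)"
| "cl_axP (PImp (PConj a b) b)"
| "cl_axP (PImp a (PImp b (PConj a b)))"
| "cl_axP (PImp a (PDisj a b))"
| "cl_axP (PImp b (PDisj a b))"
| "cl_axP (PImp (PImp a c) (PImp (PImp b c) (PImp (PDisj a b) c)))"
| "cl_axP (PImp PFalse a)"
| "cl_axP (PImp (PNeg (PNeg a)) a)"
| "cl_axP (PImp (PAll a) (substP (inst0 t) a))"
| "cl_axP (PImp (substP (inst0 t) a) (PEx a))"

inductive int_axQ :: "qform \<Rightarrow> bool" where
  "int_axQ (QImp a (QImp b a))"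
| "int_axQ (QImp (QImp a (QImp b c)) (QImp (QImp a b) (QImp a c)))"
| "int_axQ (QImp (QConj a b) a)"
| "int_axQ (QImp (QConj a b) b)"
| "int_axQ (QImp a (QImp b (QConj a b)))"
| "int_axQ (QImp a (QDisj a b))"
| "int_axQ (QImp b (QDisj a b))"
| "int_axQ (QImp (QImp a c) (QImp (QImp b c) (QImp (QDisj a b) c)))"
| "int_axQ (QImp QBot a)"
| "int_axQ (QImp (QAll a) (substQ (inst0 t) a))"
| "int_axQ (QImp (substQ (inst0 t) a) (QEx a))"

inductive qhc_axP :: "pform \<Rightarrow> bool" where
  "qhc_axP (PImp (PQue (QBang p)) p)"
| "qhc_axP (PImp (PQue (QImp a b)) (PImp (PQue a) (PQue b)))"
| "qhc_axP (PIff (PQue (QConj a b)) (PConj (PQue a) (PQue b)))"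
| "qhc_axP (PIff (PQue (QDisj a b)) (PDisj (PQue a) (PQue b)))"
| "qhc_axP (PImp (PQue QBot) PFalse)"
| "qhc_axP (PIff (PQue (QEx a)) (PEx (PQue a)))"
| "qhc_axP (PImp (PQue (QAll a)) (PAll (PQue a)))"

inductive qhc_axQ :: "qform \<Rightarrow> bool" where
  "qhc_axQ (QImp a (QBang (PQue a)))"
| "qhc_axQ (QImp (QBang (PImp p q)) (QImp (QBang p) (QBang q)))"
| "qhc_axQ (QImp (QBang PFalse) QBot)"

text \<open>Generalization-type rules use the
de Bruijn form: from C' \<longrightarrow> A infer C \<longrightarrow> \<forall>A, where C' is C shifted (so the
generalized variable does not occur free in C).\<close>
inductive qhc_der :: "form set \<Rightarrow> form \<Rightarrow> bool" for \<Gamma> where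
  qhc_prem: "A \<in> \<Gamma> \<Longrightarrow> qhc_der \<Gamma> A"
| qhc_clax: "cl_axP p \<Longrightarrow> qhc_der \<Gamma> (FP p)"
| qhc_intax: "int_axQ a \<Longrightarrow> qhc_der \<Gamma> (FQ a)"
| qhc_axp: "qhc_axP p \<Longrightarrow> qhc_der \<Gamma> (FP p)"
| qhc_axq: "qhc_axQ a \<Longrightarrow> qhc_der \<Gamma> (FQ a)"
| qhc_mpP: "qhc_der \<Gamma> (FP (PImp p q)) \<Longrightarrow> qhc_der \<Gamma> (FP p) \<Longrightarrow> qhc_der \<Gamma> (FP q)"
| qhc_mpQ: "qhc_der \<Gamma> (FQ (QImp a b)) \<Longrightarrow> qhc_der \<Gamma> (FQ a) \<Longrightarrow> qhc_der \<Gamma> (FQ b)"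
| qhc_genP: "qhc_der \<Gamma> (FP (PImp (substP Suc c) p)) \<Longrightarrow> qhc_der \<Gamma> (FP (PImp c (PAll p)))"
| qhc_exP: "qhc_der \<Gamma> (FP (PImp p (substP Suc c))) \<Longrightarrow> qhc_der \<Gamma> (FP (PImp (PEx p) c))"
| qhc_genQ: "qhc_der \<Gamma> (FQ (QImp (substQ Suc c) a)) \<Longrightarrow> qhc_der \<Gamma> (FQ (QImp c (QAll a)))"
| qhc_exQ: "qhc_der \<Gamma> (FQ (QImp a (substQ Suc c))) \<Longrightarrow> qhc_der \<Gamma> (FQ (QImp (QEx a) c))"
| qhc_bang: "qhc_der \<Gamma> (FP p) \<Longrightarrow> qhc_der \<Gamma> (FQ (QBang p))"
| qhc_que: "qhc_der \<Gamma> (FQ a) \<Longrightarrow> qhc_der \<Gamma> (FP (PQue a))"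

datatype 'n mform =
    MAtom 'n "nat list"
  | MFalse
  | MConj "'n mform" "'n mform"
  | MDisj "'n mform" "'n mform"
  | MImp "'n mform" "'n mform"
  | MEx "'n mform"
  | MAll "'n mform"
  | MBox "'n mform"

primrec substM :: "(nat \<Rightarrow> nat) \<Rightarrow> 'n mform \<Rightarrow> 'n mform" where
  "substM s (MAtom n ts) = MAtom n (map s ts)"
| "substM s MFalse = MFalse"
| "substM s (MConj a b) = MConj (substM s a) (substM s b)"
| "substM s (MDisj a b) = MDisj (substM s a) (substM s b)"
| "substM s (MImp a b) = MImp (substM s a) (substM s b)"
| "substM s (MEx a) = MEx (substM (up s) a)"
| "substM s (MAll a) = MAll (substM (up s) a)"
| "substM s (MBox a) = MBox (substM s a)"

definition MNeg :: "'n mform \<Rightarrow> 'n mform" where "MNeg p = MImp p MFalse"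

inductive cl_axM :: "'n mform \<Rightarrow> bool" where
  "cl_axM (MImp a (MImp b a))"
| "cl_axM (MImp (MImp a (MImp b c)) (MImp (MImp a b) (MImp a c)))"
| "cl_axM (MImp (MConj a b) a)"
| "cl_axM (MImp (MConj a b) b)"
| "cl_axM (MImp a (MImp b (MConj a b)))"
| "cl_axM (MImp a (MDisj a b))"
| "cl_axM (MImp b (MDisj a b))"
| "cl_axM (MImp (MImp a c) (MImp (MImp b c) (MImp (MDisj a b) c)))"
| "cl_axM (MImp MFalse a)"
| "cl_axM (MImp (MNeg (MNeg a)) a)"
| "cl_axM (MImp (MAll a) (substM (inst0 t) a))"
| "cl_axM (MImp (substM (inst0 t) a) (MEx a))"

inductive s4_axM :: "'n mform \<Rightarrow> bool" where
  "s4_axM (MImp (MBox p) p)"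
| "s4_axM (MImp (MBox p) (MBox (MBox p)))"
| "s4_axM (MImp (MBox (MImp p q)) (MImp (MBox p) (MBox q)))"

inductive qs4_der :: "'n mform set \<Rightarrow> 'n mform \<Rightarrow> bool" for \<Gamma> where
  qs4_prem: "A \<in> \<Gamma> \<Longrightarrow> qs4_der \<Gamma> A"
| qs4_clax: "cl_axM p \<Longrightarrow> qs4_der \<Gamma> p"
| qs4_s4ax: "s4_axM p \<Longrightarrow> qs4_der \<Gamma> p"
| qs4_mp: "qs4_der \<Gamma> (MImp p q) \<Longrightarrow> qs4_der \<Gamma> p \<Longrightarrow> qs4_der \<Gamma> q"
| qs4_gen: "qs4_der \<Gamma> (MImp (substM Suc c) p) \<Longrightarrow> qs4_der \<Gamma> (MImp c (MAll p))"
| qs4_ex: "qs4_der \<Gamma> (MImp p (substM Suc c)) \<Longrightarrow> qs4_der \<Gamma> (MImp (MEx p) c)"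
| qs4_nec: "qs4_der \<Gamma> p \<Longrightarrow> qs4_der \<Gamma> (MBox p)"

text \<open>Proposition variable p_n goes to Inl n; the fresh variable \<pi>-bar for problem
variable \<pi>_n is Inr n (injective, disjoint from the image of proposition variables).\<close>
primrec trP :: "pform \<Rightarrow> (nat + nat) mform"
and trQ :: "qform \<Rightarrow> (nat + nat) mform" where
  "trP (PAtom n ts) = MAtom (Inl n) ts"
| "trP PFalse = MFalse"
| "trP (PConj a b) = MConj (trP a) (trP b)"
| "trP (PDisj a b) = MDisj (trP a) (trP b)"
| "trP (PImp a b) = MImp (trP a) (trP b)"
| "trP (PEx a) = MEx (trP a)"
| "trP (PAll a) = MAll (trP a)"
| "trP (PQue a) = trQ a"
| "trQ (QAtom n ts) = MBox (MAtom (Inr n) ts)"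
| "trQ QBot = MFalse"
| "trQ (QConj a b) = MConj (trQ a) (trQ b)"
| "trQ (QDisj a b) = MDisj (trQ a) (trQ b)"
| "trQ (QImp a b) = MBox (MImp (trQ a) (trQ b))"
| "trQ (QEx a) = MEx (trQ a)"
| "trQ (QAll a) = MBox (MAll (trQ a))"
| "trQ (QBang p) = MBox (trP p)"

primrec tr :: "form \<Rightarrow> (nat + nat) mform" where
  "tr (FP p) = trP p"
| "tr (FQ a) = trQ a"

end

theory Submission
  imports Defs
begin

text \<open>Problems are translated into formulas that are
\<^emph>\<open>stable\<close> in QS4, i.e. imply their own necessitation: boxes are stable by axiom 4, and
stability is preserved by \<open>\<and>\<close>, \<open>\<or>\<close>, \<open>\<exists>\<close>.  Since QS4 has no deduction theorem for
its necessitation rule, reasoning under hypotheses is done with explicit implication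
chains \<open>h\<^sub>1 \<rightarrow> \<dots> \<rightarrow> h\<^sub>n \<rightarrow> F\<close>; when all \<open>h\<^sub>i\<close> are stable, the conclusion \<open>F\<close> may be
boxed.  This boxing is what validates the intuitionistic axioms and rules, whose
translations carry a \<open>\<box>\<close> in front of every implication and universal quantifier.\<close>

lemma up_id: "up (\<lambda>k. k) = (\<lambda>k. k)"
  by (auto simp: up_def fun_eq_iff split: nat.splits)

lemma up_comp: "up s \<circ> up t = up (s \<circ> t)"
  by (auto simp: up_def fun_eq_iff split: nat.splits)

lemma inst0_comp_up_Suc: "inst0 0 \<circ> up Suc = (\<lambda>k. k)"
  by (auto simp: up_def inst0_def fun_eq_iff split: nat.splits)

lemma substM_id: "substM (\<lambda>k. k) a = a"
  by (induction a) (simp_all add: up_id)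

lemma substM_substM: "substM s (substM t a) = substM (s \<circ> t) a"
  by (induction a arbitrary: s t) (simp_all add: up_comp)

lemma substM_inst0_up_Suc: "substM (inst0 0) (substM (up Suc) a) = a"
  by (simp add: substM_substM inst0_comp_up_Suc substM_id)

lemma trP_substP: "trP (substP s p) = substM s (trP p)"
  and trQ_substQ: "trQ (substQ s a) = substM s (trQ a)"
  by (induction p and a arbitrary: s and s) simp_all

lemma trP_PNeg: "trP (PNeg p) = MNeg (trP p)"
  by (simp add: PNeg_def MNeg_def)

lemma qs4_K: "qs4_der G (MImp a (MImp b a))"
  by (rule qs4_clax) (rule cl_axM.intros)

lemma qs4_S: "qs4_der G (MImp (MImp a (MImp b c)) (MImp (MImp a b) (MImp a c)))"
  by (rule qs4_clax) (rule cl_axM.intros)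

lemma qs4_box_T: "qs4_der G (MImp (MBox p) p)"
  by (rule qs4_s4ax) (rule s4_axM.intros)

lemma qs4_box_4: "qs4_der G (MImp (MBox p) (MBox (MBox p)))"
  by (rule qs4_s4ax) (rule s4_axM.intros)

lemma qs4_box_K: "qs4_der G (MImp (MBox (MImp p q)) (MImp (MBox p) (MBox q)))"
  by (rule qs4_s4ax) (rule s4_axM.intros)

lemma qs4_imp_refl: "qs4_der G (MImp a a)"
  by (rule qs4_mp[OF qs4_mp[OF qs4_S qs4_K] qs4_K[where b = a]])

lemma qs4_weaken: "qs4_der G q \<Longrightarrow> qs4_der G (MImp p q)"
  by (rule qs4_mp[OF qs4_K])

lemma qs4_imp_trans: "qs4_der G (MImp p q) \<Longrightarrow> qs4_der G (MImp q r) \<Longrightarrow> qs4_der G (MImp p r)"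
  by (rule qs4_mp[OF qs4_mp[OF qs4_S qs4_weaken]])

lemma qs4_S_lift:
  "qs4_der G (MImp a (MImp b c)) \<Longrightarrow>
   qs4_der G (MImp (MImp x a) (MImp (MImp x b) (MImp x c)))"
  by (rule qs4_imp_trans[OF qs4_mp[OF qs4_S qs4_weaken] qs4_S])

lemma qs4_imp2_trans:
  "qs4_der G (MImp a (MImp b c)) \<Longrightarrow> qs4_der G (MImp c d) \<Longrightarrow> qs4_der G (MImp a (MImp b d))"
  by (rule qs4_imp_trans, assumption, rule qs4_mp[OF qs4_S qs4_weaken])

lemma qs4_box_mono: "qs4_der G (MImp p q) \<Longrightarrow> qs4_der G (MImp (MBox p) (MBox q))"
  by (rule qs4_mp[OF qs4_box_K qs4_nec])

lemma qs4_conjI: "qs4_der G a \<Longrightarrow> qs4_der G b \<Longrightarrow> qs4_der G (MConj a b)"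
  by (rule qs4_mp[OF qs4_mp[OF qs4_clax[OF cl_axM.intros(5)]]])

fun MImps :: "'n mform list \<Rightarrow> 'n mform \<Rightarrow> 'n mform" where
  "MImps [] F = F"
| "MImps (h # H) F = MImp h (MImps H F)"

lemma qs4_MImps_weaken: "qs4_der G F \<Longrightarrow> qs4_der G (MImps H F)"
  by (induction H) (auto intro: qs4_weaken)

lemma qs4_MImps_distrib: "qs4_der G (MImp (MImps H (MImp p q)) (MImp (MImps H p) (MImps H q)))"
  by (induction H) (auto intro: qs4_imp_refl qs4_S_lift)

lemma qs4_MImps_mp:
  "qs4_der G (MImps H (MImp p q)) \<Longrightarrow> qs4_der G (MImps H p) \<Longrightarrow> qs4_der G (MImps H q)"
  by (rule qs4_mp[OF qs4_mp[OF qs4_MImps_distrib]])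

lemma qs4_MImps_app:
  "qs4_der G (MImp p q) \<Longrightarrow> qs4_der G (MImps H p) \<Longrightarrow> qs4_der G (MImps H q)"
  by (rule qs4_MImps_mp[OF qs4_MImps_weaken])

lemma qs4_MImps_app2:
  "qs4_der G (MImp p (MImp q r)) \<Longrightarrow> qs4_der G (MImps H p) \<Longrightarrow> qs4_der G (MImps H q) \<Longrightarrow>
   qs4_der G (MImps H r)"
  by (rule qs4_MImps_mp[OF qs4_MImps_app])

lemma qs4_MImps_hyp: "h \<in> set H \<Longrightarrow> qs4_der G (MImps H h)"
proof (induction H)
  case (Cons x H)
  have "qs4_der G (MImp x (MImps H x))"
    by (induction H) (auto intro: qs4_imp_refl qs4_imp_trans qs4_K)
  with Cons show ?case
    by (cases "h = x") (auto intro: qs4_weaken)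
qed simp

lemma qs4_MImps_cut:
  "qs4_der G (MImps H (MImps K F)) \<Longrightarrow> \<forall>k \<in> set K. qs4_der G (MImps H k) \<Longrightarrow>
   qs4_der G (MImps H F)"
  by (induction K) (auto intro: qs4_MImps_mp)

lemma qs4_box_MImps: "qs4_der G (MImp (MBox (MImps H F)) (MImps (map MBox H) (MBox F)))"
  by (induction H) (auto intro: qs4_imp_refl qs4_imp2_trans[OF qs4_box_K])

definition qs4_stable :: "'n mform set \<Rightarrow> 'n mform \<Rightarrow> bool" where
  "qs4_stable G p \<longleftrightarrow> qs4_der G (MImp p (MBox p))"

lemma qs4_stable_MBox: "qs4_stable G (MBox p)"
  by (simp add: qs4_stable_def qs4_box_4)

lemma qs4_stable_MFalse: "qs4_stable G MFalse"
  by (simp add: qs4_stable_def qs4_clax cl_axM.intros)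

lemma qs4_stable_MConj:
  assumes "qs4_stable G a" and "qs4_stable G b"
  shows "qs4_stable G (MConj a b)"
proof -
  let ?H = "[MConj a b]"
  have "qs4_der G (MImps ?H (MBox a))"
    using qs4_imp_trans[OF qs4_clax[OF cl_axM.intros(3)] assms(1)[unfolded qs4_stable_def]]
    by simp
  moreover have "qs4_der G (MImps ?H (MBox b))"
    using qs4_imp_trans[OF qs4_clax[OF cl_axM.intros(4)] assms(2)[unfolded qs4_stable_def]]
    by simp
  moreover have "qs4_der G (MImp (MBox a) (MImp (MBox b) (MBox (MConj a b))))"
    by (rule qs4_imp_trans[OF qs4_box_mono qs4_box_K]) (rule qs4_clax, rule cl_axM.intros)
  ultimately have "qs4_der G (MImps ?H (MBox (MConj a b)))"
    by (rule qs4_MImps_app2[rotated])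
  then show ?thesis
    by (simp add: qs4_stable_def)
qed

lemma qs4_stable_MDisj:
  assumes "qs4_stable G a" and "qs4_stable G b"
  shows "qs4_stable G (MDisj a b)"
proof -
  have "qs4_der G (MImp a (MBox (MDisj a b)))"
    using assms(1) unfolding qs4_stable_def
    by (rule qs4_imp_trans[OF _ qs4_box_mono[OF qs4_clax[OF cl_axM.intros(6)]]])
  moreover have "qs4_der G (MImp b (MBox (MDisj a b)))"
    using assms(2) unfolding qs4_stable_def
    by (rule qs4_imp_trans[OF _ qs4_box_mono[OF qs4_clax[OF cl_axM.intros(7)]]])
  ultimately show ?thesis
    unfolding qs4_stable_def by (meson cl_axM.intros(8) qs4_clax qs4_mp)
qed

lemma qs4_stable_MEx:
  assumes "qs4_stable G a"
  shows "qs4_stable G (MEx a)"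
proof -
  let ?a' = "substM (up Suc) a"
  have "qs4_der G (MImp (substM (inst0 0) ?a') (MEx ?a'))"
    by (rule qs4_clax) (rule cl_axM.intros)
  then have "qs4_der G (MImp a (MEx ?a'))"
    by (simp only: substM_inst0_up_Suc)
  then have "qs4_der G (MImp a (substM Suc (MBox (MEx a))))"
    using assms unfolding qs4_stable_def by (auto intro: qs4_imp_trans qs4_box_mono)
  then show ?thesis
    unfolding qs4_stable_def by (rule qs4_ex)
qed

lemma qs4_MImps_box:
  assumes "\<forall>h \<in> set H. qs4_stable G h" and "qs4_der G (MImps H F)"
  shows "qs4_der G (MImps H (MBox F))"
proof (rule qs4_MImps_cut)
  show "qs4_der G (MImps H (MImps (map MBox H) (MBox F)))"
    by (rule qs4_MImps_weaken, rule qs4_mp[OF qs4_box_MImps qs4_nec[OF assms(2)]])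
  show "\<forall>k \<in> set (map MBox H). qs4_der G (MImps H k)"
    using assms(1) by (auto simp: qs4_stable_def intro: qs4_MImps_app qs4_MImps_hyp)
qed

lemma qs4_MImps_nec_box:
  assumes "\<forall>h \<in> set H. qs4_stable G h" and "qs4_der G (MImps H F)"
  shows "qs4_der G (MBox (MImps H (MBox F)))"
  using qs4_MImps_box[OF assms] by (rule qs4_nec)

lemma qs4_stable_trQ: "qs4_stable G (trQ a)"
  by (induction a rule: qform.induct[where ?P1.0 = "\<lambda>_. True"])
     (simp_all add: qs4_stable_MBox qs4_stable_MFalse qs4_stable_MConj qs4_stable_MDisj
        qs4_stable_MEx)

lemma cl_axM_trP: "cl_axP p \<Longrightarrow> cl_axM (trP p)"
  by (induction rule: cl_axP.induct) (auto simp: trP_substP trP_PNeg intro: cl_axM.intros)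

lemma qs4_trQ_int_axQ: "int_axQ a \<Longrightarrow> qs4_der G (trQ a)"
proof (induction rule: int_axQ.induct)
  case (1 a b)
  show ?case
    using qs4_MImps_nec_box[of "[trQ a]" G "MImp (trQ b) (trQ a)"]
    by (simp add: qs4_K qs4_stable_trQ)
next
  case (2 a b c)
  let ?A = "trQ a" and ?B = "trQ b" and ?C = "trQ c"
  let ?P = "MBox (MImp ?A (MBox (MImp ?B ?C)))" and ?Q = "MBox (MImp ?A ?B)"
  let ?H = "[?P, ?Q, ?A]"
  have A: "qs4_der G (MImps ?H ?A)"
    by (rule qs4_MImps_hyp) simp
  have "qs4_der G (MImps ?H (MImp ?A (MBox (MImp ?B ?C))))"
    by (rule qs4_MImps_app[OF qs4_box_T], rule qs4_MImps_hyp) simp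
  then have "qs4_der G (MImps ?H (MImp ?B ?C))"
    using A by (meson qs4_MImps_app qs4_box_T qs4_MImps_mp)
  moreover have "qs4_der G (MImps ?H ?B)"
    by (rule qs4_MImps_mp[OF _ A], rule qs4_MImps_app[OF qs4_box_T], rule qs4_MImps_hyp) simp
  ultimately have "qs4_der G (MImps ?H ?C)"
    by (rule qs4_MImps_mp)
  then have "qs4_der G (MImps [?P, ?Q] (MImp ?A ?C))"
    by simp
  then have "qs4_der G (MImps [?P] (MImp ?Q (MBox (MImp ?A ?C))))"
    using qs4_MImps_box[of "[?P, ?Q]"] by (simp add: qs4_stable_MBox)
  then show ?case
    using qs4_MImps_nec_box[of "[?P]"] by (simp add: qs4_stable_MBox)
next
  case (5 a b)
  let ?A = "trQ a" and ?B = "trQ b"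
  have "qs4_der G (MImps [?A, ?B] (MConj ?A ?B))"
    by (meson qs4_MImps_app2 cl_axM.intros(5) qs4_MImps_hyp list.set_intros qs4_clax)
  then show ?case
    using qs4_MImps_nec_box[of "[?A]"] by (simp add: qs4_stable_trQ)
next
  case (8 a c b)
  let ?A = "trQ a" and ?B = "trQ b" and ?C = "trQ c"
  let ?P = "MBox (MImp ?A ?C)" and ?Q = "MBox (MImp ?B ?C)"
  let ?H = "[?P, ?Q, MDisj ?A ?B]"
  have "qs4_der G (MImps ?H (MImp ?A ?C))" "qs4_der G (MImps ?H (MImp ?B ?C))"
    by (rule qs4_MImps_app[OF qs4_box_T], rule qs4_MImps_hyp, simp)+
  moreover have "qs4_der G (MImps ?H (MDisj ?A ?B))"
    by (rule qs4_MImps_hyp) simp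
  moreover have "qs4_der G (MImp (MImp ?A ?C) (MImp (MImp ?B ?C) (MImp (MDisj ?A ?B) ?C)))"
    by (rule qs4_clax) (rule cl_axM.intros)
  ultimately have "qs4_der G (MImps ?H ?C)"
    by (meson qs4_MImps_app2 qs4_MImps_mp)
  then have "qs4_der G (MImps [?P, ?Q] (MImp (MDisj ?A ?B) ?C))"
    by simp
  then have "qs4_der G (MImps [?P] (MImp ?Q (MBox (MImp (MDisj ?A ?B) ?C))))"
    using qs4_MImps_box[of "[?P, ?Q]"] by (simp add: qs4_stable_MBox)
  then show ?case
    using qs4_MImps_nec_box[of "[?P]"] by (simp add: qs4_stable_MBox)
next
  case (10 a t)
  have "qs4_der G (MImp (MAll (trQ a)) (substM (inst0 t) (trQ a)))"
    by (rule qs4_clax) (rule cl_axM.intros)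
  then show ?case
    by (simp add: trQ_substQ qs4_nec qs4_imp_trans[OF qs4_box_T])
next
  case (11 t a)
  have "qs4_der G (MImp (substM (inst0 t) (trQ a)) (MEx (trQ a)))"
    by (rule qs4_clax) (rule cl_axM.intros)
  then show ?case
    by (simp add: trQ_substQ qs4_nec)
qed (simp_all add: qs4_nec qs4_clax cl_axM.intros)

lemma qs4_trP_qhc_axP: "qhc_axP p \<Longrightarrow> qs4_der G (trP p)"
  by (induction rule: qhc_axP.induct)
     (auto simp: PIff_def qs4_box_T qs4_imp_refl intro: qs4_conjI qs4_clax cl_axM.intros)

lemma qs4_trQ_qhc_axQ: "qhc_axQ a \<Longrightarrow> qs4_der G (trQ a)"
proof (induction rule: qhc_axQ.induct)
  case (1 a)
  then show ?case
    using qs4_stable_trQ by (simp add: qs4_stable_def qs4_nec)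
next
  case (2 p q)
  show ?case
    using qs4_MImps_nec_box[of "[MBox (MImp (trP p) (trP q))]"]
    by (simp add: qs4_box_K qs4_stable_MBox)
next
  case 3
  then show ?case
    by (simp add: qs4_nec qs4_box_T)
qed

lemma qs4_der_tr: "qhc_der \<Gamma> A \<Longrightarrow> qs4_der (tr ` \<Gamma>) (tr A)"
proof (induction rule: qhc_der.induct)
  case (qhc_mpQ a b)
  then show ?case
    by simp (meson qs4_box_T qs4_mp)
next
  case (qhc_genQ c a)
  have "qs4_der (tr ` \<Gamma>) (MImp (substM Suc (trQ c)) (trQ a))"
    using qhc_genQ.IH by (simp add: trQ_substQ) (meson qs4_box_T qs4_mp)
  then have "qs4_der (tr ` \<Gamma>) (MImps [trQ c] (MAll (trQ a)))"
    by (simp add: qs4_gen)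
  then show ?case
    using qs4_MImps_nec_box[of "[trQ c]"] by (simp add: qs4_stable_trQ)
next
  case (qhc_exQ a c)
  have "qs4_der (tr ` \<Gamma>) (MImp (trQ a) (substM Suc (trQ c)))"
    using qhc_exQ.IH by (simp add: trQ_substQ) (meson qs4_box_T qs4_mp)
  then show ?case
    by (simp add: qs4_ex qs4_nec)
qed (auto simp: trP_substP qs4_prem qs4_clax cl_axM_trP qs4_trQ_int_axQ qs4_trP_qhc_axP
        qs4_trQ_qhc_axQ qs4_nec qs4_gen qs4_ex intro: qs4_mp)

theorem theorem3p1:
  fixes As :: "form list" and A :: form
  assumes "qhc_der (set As) A"
  shows "qs4_der (set (map tr As)) (tr A)"
  using qs4_der_tr[OF assms] by simp

end
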